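(* Let $H$ be a complex Hilbert space, $A\in B(H)$ a nonzero positive semidefinite operator, and $T\in B_{A^{1/2}}(H)$. Then $T$ is $A$-invertible in $B_{A^{1/2}}(H)$ if and only if there exist operators $S_1,S_2\in B_{A^{1/2}}(H)$ such that $ATS_1=AS_2T=A$.
   Context: $B_{A^{1/2}}(H)=\{X\in B(H): R(X^*A^{1/2})\subset R(A^{1/2})\}$. A nonzero $T\in B_{A^{1/2}}(H)$ is $A$-invertible in $B_{A^{1/2}}(H)$ if there is a nonzero $S\in B_{A^{1/2}}(H)$ with $ATS=AST=A$. *)

theory Defs
  imports "HOL-Analysis.Analysis"
begin

text \<open>The distribution has no complex inner product spaces, so we introduce a
class: a (real) Banach space carrying a complex scalar multiplication that
extends the real one, and a complex inner product (linear in the first,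
conjugate linear in the second argument) inducing the norm.\<close>

class chilbert = banach +
  fixes scaleC :: "complex \<Rightarrow> 'a \<Rightarrow> 'a"
    and cinner :: "'a \<Rightarrow> 'a \<Rightarrow> complex"
  assumes scaleC_of_real: "scaleC (complex_of_real r) x = scaleR r x"
    and scaleC_add_right: "scaleC c (x + y) = scaleC c x + scaleC c y"
    and scaleC_add_left: "scaleC (c + d) x = scaleC c x + scaleC d x"
    and scaleC_scaleC: "scaleC c (scaleC d x) = scaleC (c * d) x"
    and scaleC_one: "scaleC 1 x = x"
    and cinner_commute: "cinner x y = cnj (cinner y x)"
    and cinner_add_left: "cinner (x + y) z = cinner x z + cinner y z"
    and cinner_scaleC_left: "cinner (scaleC c x) y = c * cinner x y"
    and cinner_norm: "cinner x x = complex_of_real ((norm x)\<^sup>2)"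

definition bounded_clinear :: "('a::chilbert \<Rightarrow> 'a) \<Rightarrow> bool" where
  "bounded_clinear f \<longleftrightarrow> bounded_linear f \<and> (\<forall>c x. f (scaleC c x) = scaleC c (f x))"

definition BH :: "('a::chilbert \<Rightarrow> 'a) set" where
  "BH = {f. bounded_clinear f}"

definition adjoint :: "('a::chilbert \<Rightarrow> 'a) \<Rightarrow> ('a \<Rightarrow> 'a)" where
  "adjoint X = (THE Y. \<forall>x y. cinner (X x) y = cinner x (Y y))"

definition positive_op :: "('a::chilbert \<Rightarrow> 'a) \<Rightarrow> bool" where
  "positive_op A \<longleftrightarrow> A \<in> BH \<and>
     (\<forall>x. Im (cinner (A x) x) = 0 \<and> Re (cinner (A x) x) \<ge> 0)"

definition op_sqrt :: "('a::chilbert \<Rightarrow> 'a) \<Rightarrow> ('a \<Rightarrow> 'a)" where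
  "op_sqrt A = (THE R. positive_op R \<and> R \<circ> R = A)"

definition B_sqrtA :: "('a::chilbert \<Rightarrow> 'a) \<Rightarrow> ('a \<Rightarrow> 'a) set" where
  "B_sqrtA A = {X \<in> BH. range (adjoint X \<circ> op_sqrt A) \<subseteq> range (op_sqrt A)}"

definition A_invertible :: "('a::chilbert \<Rightarrow> 'a) \<Rightarrow> ('a \<Rightarrow> 'a) \<Rightarrow> bool" where
  "A_invertible A T \<longleftrightarrow> T \<in> B_sqrtA A \<and> T \<noteq> (\<lambda>_. 0) \<and>
     (\<exists>S \<in> B_sqrtA A. S \<noteq> (\<lambda>_. 0) \<and> A \<circ> T \<circ> S = A \<and> A \<circ> S \<circ> T = A)"

end

theory Submission
  imports Defs
begin

text \<open>If \<open>A T S\<^sub>1 = A = A S\<^sub>2 T\<close>, then \<open>A S\<^sub>1 = A S\<^sub>2 T S\<^sub>1 = A S\<^sub>2\<close>, because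
  every \<open>X \<in> B_sqrtA A\<close> maps the kernel of A into itself and
  \<open>T S\<^sub>1 x - x\<close> lies in that kernel; hence \<open>S\<^sub>1\<close> is a two-sided A-inverse of T.
  The kernel is invariant since \<open>A z = 0\<close> forces \<open>A\<^sup>1\<^sup>/\<^sup>2 z = 0\<close>, and then
  \<open>\<langle>A\<^sup>1\<^sup>/\<^sup>2 X z, y\<rangle> = \<langle>z, X\<^sup>* A\<^sup>1\<^sup>/\<^sup>2 y\<rangle> = \<langle>z, A\<^sup>1\<^sup>/\<^sup>2 w\<rangle> = \<langle>A\<^sup>1\<^sup>/\<^sup>2 z, w\<rangle> = 0\<close>.

  As adjoint and square root are definite descriptions, the bulk of the work is their
  existence and uniqueness: adjoints come from the Riesz representation theorem, and the
  positive square root of A is \<open>\<surd>M (I - S)\<close> where \<open>\<parallel>A\<parallel> \<le> M\<close> and S is the power series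
  of \<open>1 - \<surd>(1 - x)\<close> evaluated at the contraction \<open>I - A / M\<close>; it is unique because it
  commutes with every positive square root of A.\<close>

section \<open>Inner product geometry and the Riesz representation theorem\<close>

lemma scaleC_zero_left [simp]: "scaleC 0 x = 0"
  using scaleC_of_real[of 0 x] by simp

lemma scaleC_zero_right [simp]: "scaleC c 0 = 0"
  using scaleC_add_right[of c 0 0] by simp

lemma scaleC_diff_right: "scaleC c (x - y) = scaleC c x - scaleC c y"
  using scaleC_add_right[of c "x - y" y] by (simp add: eq_diff_eq)

lemma scaleC_scaleR_commute: "scaleC c (scaleR r x) = scaleR r (scaleC c x)"
  by (metis scaleC_of_real scaleC_scaleC mult.commute)

lemma cinner_zero_left [simp]: "cinner 0 y = 0"
  using cinner_add_left[of 0 0 y] by simp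

lemma cinner_diff_left: "cinner (x - y) z = cinner x z - cinner y z"
  using cinner_add_left[of "x - y" y z] by simp

lemma cinner_add_right: "cinner x (y + z) = cinner x y + cinner x z"
  by (metis cinner_add_left cinner_commute complex_cnj_add)

lemma cinner_zero_right [simp]: "cinner x 0 = 0"
  using cinner_add_right[of x 0 0] by simp

lemma cinner_diff_right: "cinner x (y - z) = cinner x y - cinner x z"
  by (metis cinner_commute cinner_diff_left complex_cnj_diff)

lemma cinner_scaleC_right: "cinner x (scaleC c y) = cnj c * cinner x y"
  by (metis cinner_commute cinner_scaleC_left complex_cnj_mult)

lemma cinner_scaleR_left: "cinner (scaleR r x) y = of_real r * cinner x y"
  by (metis cinner_scaleC_left scaleC_of_real)

lemma cinner_scaleR_right: "cinner x (scaleR r y) = of_real r * cinner x y"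
  by (metis cinner_scaleC_right scaleC_of_real complex_cnj_complex_of_real)

lemma cinner_self_eq_zero [simp]: "cinner x x = 0 \<longleftrightarrow> x = 0"
  by (simp add: cinner_norm)

lemma Re_cinner_self: "Re (cinner x x) = (norm x)\<^sup>2"
  by (simp add: cinner_norm)

lemma norm_add_square: "(norm (x + y))\<^sup>2 = (norm x)\<^sup>2 + (norm y)\<^sup>2 + 2 * Re (cinner x y)"
proof -
  have "Re (cinner y x) = Re (cinner x y)"
    by (subst cinner_commute) simp
  then show ?thesis
    by (simp flip: Re_cinner_self add: cinner_add_left cinner_add_right)
qed

lemma norm_diff_square: "(norm (x - y))\<^sup>2 = (norm x)\<^sup>2 + (norm y)\<^sup>2 - 2 * Re (cinner x y)"
  using norm_add_square[of x "- y"] cinner_diff_right[of x 0 y] by simp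

lemma parallelogram_law:
  fixes x y :: "'a::chilbert"
  shows "(norm (x + y))\<^sup>2 + (norm (x - y))\<^sup>2 = 2 * (norm x)\<^sup>2 + 2 * (norm y)\<^sup>2"
  using norm_add_square[of x y] norm_diff_square[of x y] by simp

lemma norm_scaleC: "norm (scaleC c x) = cmod c * norm x"
proof -
  have "complex_of_real ((norm (scaleC c x))\<^sup>2) = c * cnj c * complex_of_real ((norm x)\<^sup>2)"
    by (simp only: flip: cinner_norm) (simp add: cinner_scaleC_left cinner_scaleC_right)
  also have "c * cnj c = complex_of_real ((cmod c)\<^sup>2)"
    by (rule complex_norm_square[symmetric])
  finally have "(norm (scaleC c x))\<^sup>2 = (cmod c * norm x)\<^sup>2"
    by (simp only: power_mult_distrib of_real_eq_iff flip: of_real_mult)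
  then show ?thesis
    by simp
qed

text \<open>This holds for \<open>y = 0\<close> too, as \<open>0 / 0 = 0\<close>.\<close>
lemma norm_diff_projection_square:
  "(norm (x - scaleC (cinner x y / of_real ((norm y)\<^sup>2)) y))\<^sup>2
     = (norm x)\<^sup>2 - (cmod (cinner x y))\<^sup>2 / (norm y)\<^sup>2"
proof (cases "y = 0")
  case False
  define a where "a = cinner x y"
  define n where "n = (norm y)\<^sup>2"
  define t where "t = a / of_real n"
  have n: "n \<noteq> 0" using False by (simp add: n_def)
  have "cinner (x - scaleC t y) (x - scaleC t y)
      = cinner x x - cnj t * a - t * cinner y x + t * cnj t * cinner y y"
    by (simp add: cinner_diff_left cinner_diff_right cinner_scaleC_left cinner_scaleC_right
        a_def algebra_simps)
  also have "\<dots> = of_real ((norm x)\<^sup>2) - 2 * (a * cnj a) / of_real n + (a * cnj a) / of_real n"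
    using n by (simp add: t_def n_def cinner_norm cinner_commute[of y x] a_def field_simps
        power2_eq_square)
  also have "\<dots> = of_real ((norm x)\<^sup>2 - (cmod a)\<^sup>2 / n)"
    by (simp add: complex_norm_square[symmetric])
  finally have "(norm (x - scaleC t y))\<^sup>2 = (norm x)\<^sup>2 - (cmod a)\<^sup>2 / n"
    by (simp only: cinner_norm of_real_eq_iff)
  then show ?thesis
    by (simp add: t_def a_def n_def)
qed simp

lemma cinner_Cauchy_Schwarz: "cmod (cinner x y) \<le> norm x * norm y"
proof (cases "y = 0")
  case False
  have "0 \<le> (norm x)\<^sup>2 - (cmod (cinner x y))\<^sup>2 / (norm y)\<^sup>2"
    by (simp flip: norm_diff_projection_square)
  then have "(cmod (cinner x y))\<^sup>2 \<le> (norm x * norm y)\<^sup>2"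
    using False by (simp add: field_simps)
  then show ?thesis
    by (simp add: power2_le_iff_abs_le)
qed simp

lemma Re_cinner_le_norm: "Re (cinner x y) \<le> norm x * norm y"
  using complex_Re_le_cmod cinner_Cauchy_Schwarz order_trans by blast

lemma cinner_eq_zero_if_norm_minimal:
  assumes "\<And>t. norm z \<le> norm (z - scaleC t k)"
  shows "cinner z k = 0"
proof (cases "k = 0")
  case False
  have "(norm z)\<^sup>2 \<le> (norm z)\<^sup>2 - (cmod (cinner z k))\<^sup>2 / (norm k)\<^sup>2"
    by (metis assms norm_diff_projection_square norm_ge_zero power_mono)
  then show ?thesis
    using False by (simp add: divide_le_0_iff)
qed simp

lemma bounded_linear_cinner_left: "bounded_linear (\<lambda>x. cinner x y)"
  by (rule bounded_linear_intro[where K = "norm y"])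
     (simp_all add: cinner_add_left cinner_scaleR_left cinner_Cauchy_Schwarz scaleR_conv_of_real)

lemma closed_midpoint_convex_has_min_norm:
  fixes C :: "'a::chilbert set"
  assumes "closed C" and "x0 \<in> C"
    and midpoint: "\<And>x y. x \<in> C \<Longrightarrow> y \<in> C \<Longrightarrow> (1/2) *\<^sub>R (x + y) \<in> C"
  shows "\<exists>z\<in>C. \<forall>w\<in>C. norm z \<le> norm w"
proof -
  define d where "d = (INF x\<in>C. (norm x)\<^sup>2)"
  have d_le: "d \<le> (norm x)\<^sup>2" if "x \<in> C" for x
    unfolding d_def using that by (intro cINF_lower bdd_belowI2[where m = 0]) auto
  have "\<exists>x\<in>C. (norm x)\<^sup>2 < d + inverse (Suc n)" for n :: nat
    unfolding d_def using \<open>x0 \<in> C\<close>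
    by (subst cINF_less_iff[symmetric]) (auto intro: bdd_belowI2[where m = 0])
  then obtain xs where xs: "\<And>n. xs n \<in> C" "\<And>n. (norm (xs n))\<^sup>2 < d + inverse (Suc n)"
    by metis
  have dist_xs: "(norm (xs m - xs n))\<^sup>2 < 2 * inverse (Suc m) + 2 * inverse (Suc n)" for m n
  proof -
    have "d \<le> (norm ((1/2) *\<^sub>R (xs m + xs n)))\<^sup>2"
      by (intro d_le midpoint xs)
    then have "4 * d \<le> (norm (xs m + xs n))\<^sup>2"
      by (simp add: power_divide)
    then show ?thesis
      using parallelogram_law[of "xs m" "xs n"] xs(2)[of m] xs(2)[of n] by linarith
  qed
  have "Cauchy xs"
  proof (rule metric_CauchyI)
    fix e :: real assume "e > 0"
    then obtain N where N: "N > 0" "inverse (real N) < e\<^sup>2 / 4"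
      using ex_inverse_of_nat_less[of "e\<^sup>2 / 4"] by auto
    have "dist (xs m) (xs n) < e" if "m \<ge> N" "n \<ge> N" for m n
    proof -
      have "inverse (real (Suc m)) \<le> inverse N" "inverse (real (Suc n)) \<le> inverse N"
        using that N(1) by (auto intro!: le_imp_inverse_le)
      then have "(dist (xs m) (xs n))\<^sup>2 < e\<^sup>2"
        using dist_xs[of m n] N(2) by (simp add: dist_norm)
      then show ?thesis
        using \<open>e > 0\<close> by (simp add: power_less_imp_less_base)
    qed
    then show "\<exists>N. \<forall>m\<ge>N. \<forall>n\<ge>N. dist (xs m) (xs n) < e"
      by blast
  qed
  then obtain z where z: "xs \<longlonglongrightarrow> z"
    using Cauchy_convergent_iff convergent_def by blast
  have "z \<in> C"
    using \<open>closed C\<close> xs(1) z closed_sequentially by blast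
  moreover have "(norm z)\<^sup>2 \<le> d"
  proof (rule LIMSEQ_le)
    show "(\<lambda>n. (norm (xs n))\<^sup>2) \<longlonglongrightarrow> (norm z)\<^sup>2"
      by (intro tendsto_intros z)
    show "(\<lambda>n. d + inverse (Suc n)) \<longlonglongrightarrow> d"
      using tendsto_add[OF tendsto_const LIMSEQ_inverse_real_of_nat, of d] by simp
  qed (use xs(2) less_imp_le in blast)
  ultimately show ?thesis
    using d_le by (meson order_trans power2_le_imp_le norm_ge_zero)
qed

theorem Riesz_representation:
  fixes f :: "'a::chilbert \<Rightarrow> complex"
  assumes f: "bounded_linear f" and f_scaleC: "\<And>c x. f (scaleC c x) = c * f x"
  shows "\<exists>y. \<forall>x. f x = cinner x y"
proof (cases "\<forall>x. f x = 0")
  case False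
  then obtain x0 where x0: "f x0 \<noteq> 0" by blast
  interpret f: bounded_linear f by (rule f)
  define C where "C = {x. f x = 1}"
  have closed: "closed C"
    unfolding C_def by (intro closed_Collect_eq continuous_intros f.continuous_on)
  have nonempty: "scaleC (1 / f x0) x0 \<in> C"
    using x0 by (simp add: C_def f_scaleC)
  have midpoint: "(1/2) *\<^sub>R (x + y) \<in> C" if "x \<in> C" "y \<in> C" for x y
    using that by (simp add: C_def f.scaleR f.add scaleR_conv_of_real)
  obtain z where "z \<in> C" and z_min: "\<And>w. w \<in> C \<Longrightarrow> norm z \<le> norm w"
    using closed_midpoint_convex_has_min_norm[OF closed nonempty midpoint] by blast
  then have fz: "f z = 1" by (simp add: C_def)
  have z_orth: "cinner z k = 0" if "f k = 0" for k
    using that fz by (intro cinner_eq_zero_if_norm_minimal z_min) (simp add: C_def f.diff f_scaleC)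
  have "z \<noteq> 0" using fz by auto
  have "f x = cinner x (scaleR (1 / (norm z)\<^sup>2) z)" for x
  proof -
    have "cinner z (x - scaleC (f x) z) = 0"
      by (intro z_orth) (simp add: f.diff f_scaleC fz)
    then have "cinner x z = f x * of_real ((norm z)\<^sup>2)"
      by (subst cinner_commute) (simp add: cinner_diff_right cinner_scaleC_right cinner_norm)
    then show ?thesis
      using \<open>z \<noteq> 0\<close> by (simp add: cinner_scaleR_right)
  qed
  then show ?thesis by blast
qed (auto intro: exI[of _ 0])

section \<open>Bounded operators, adjoints and positive operators\<close>

lemma bounded_linear_scaleC: "bounded_linear (scaleC c :: 'a::chilbert \<Rightarrow> 'a)"
  by (rule bounded_linear_intro[where K = "cmod c"])
     (simp_all add: scaleC_add_right scaleC_scaleR_commute norm_scaleC)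

lemma BH_I: "bounded_linear X \<Longrightarrow> (\<And>c x. X (scaleC c x) = scaleC c (X x)) \<Longrightarrow> X \<in> BH"
  by (simp add: BH_def bounded_clinear_def)

lemma BH_bounded_linear: "X \<in> BH \<Longrightarrow> bounded_linear X"
  by (simp add: BH_def bounded_clinear_def)

lemma BH_linear: "X \<in> BH \<Longrightarrow> linear X"
  by (simp add: BH_bounded_linear bounded_linear.linear)

lemma BH_scaleC: "X \<in> BH \<Longrightarrow> X (scaleC c x) = scaleC c (X x)"
  by (simp add: BH_def bounded_clinear_def)

lemma BH_add: "X \<in> BH \<Longrightarrow> X (x + y) = X x + X y"
  by (simp add: BH_linear linear_add)

lemma BH_diff: "X \<in> BH \<Longrightarrow> X (x - y) = X x - X y"
  by (simp add: BH_linear linear_diff)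

lemma BH_zero: "X \<in> BH \<Longrightarrow> X 0 = 0"
  by (simp add: BH_linear linear_0)

lemma BH_scaleR: "X \<in> BH \<Longrightarrow> X (scaleR r x) = scaleR r (X x)"
  by (simp add: BH_linear linear_scale)

lemma BH_pos_bounded: "X \<in> BH \<Longrightarrow> \<exists>K>0. \<forall>x. norm (X x) \<le> norm x * K"
  using BH_bounded_linear bounded_linear.pos_bounded by blast

lemma BH_ident: "(\<lambda>x. x) \<in> BH"
  by (rule BH_I) simp_all

lemma BH_compose: "X \<in> BH \<Longrightarrow> Y \<in> BH \<Longrightarrow> (\<lambda>x. X (Y x)) \<in> BH"
  by (rule BH_I) (simp_all add: bounded_linear_compose BH_bounded_linear BH_scaleC)

lemma BH_sub: "X \<in> BH \<Longrightarrow> Y \<in> BH \<Longrightarrow> (\<lambda>x. X x - Y x) \<in> BH"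
  by (rule BH_I) (simp_all add: bounded_linear_sub BH_bounded_linear BH_scaleC scaleC_diff_right)

lemma BH_scale: "X \<in> BH \<Longrightarrow> (\<lambda>x. r *\<^sub>R X x) \<in> BH"
  by (rule BH_I) (simp_all add: BH_bounded_linear bounded_linear_scaleR_right
      bounded_linear_compose BH_scaleC scaleC_scaleR_commute)

lemma BH_funpow: "X \<in> BH \<Longrightarrow> X ^^ n \<in> BH"
  by (induction n) (simp_all add: BH_ident BH_compose id_def comp_def)

lemma cinner_adjoint:
  fixes X :: "'a::chilbert \<Rightarrow> 'a"
  assumes X: "X \<in> BH"
  shows "cinner (X x) y = cinner x (adjoint X y)"
proof -
  have "\<exists>v. \<forall>x. cinner (X x) y = cinner x v" for y
    using X by (intro Riesz_representation bounded_linear_compose[OF bounded_linear_cinner_left]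
        BH_bounded_linear) (simp_all add: BH_scaleC cinner_scaleC_left)
  then obtain Y where Y: "\<forall>x y. cinner (X x) y = cinner x (Y y)"
    by metis
  have "adjoint X = Y"
    unfolding adjoint_def
  proof (rule the_equality)
    fix Z assume "\<forall>x y. cinner (X x) y = cinner x (Z y)"
    then have "cinner (Z y - Y y) (Z y - Y y) = 0" for y
      using Y by (simp add: cinner_diff_right cinner_diff_left)
    then show "Z = Y" by auto
  qed (rule Y)
  with Y show ?thesis by simp
qed

lemma positive_op_BH: "positive_op P \<Longrightarrow> P \<in> BH"
  by (simp add: positive_op_def)

lemma positive_op_Re_form_nonneg: "positive_op P \<Longrightarrow> Re (cinner (P x) x) \<ge> 0"
  by (simp add: positive_op_def)

lemma positive_op_form_real: "positive_op P \<Longrightarrow> cnj (cinner (P x) x) = cinner (P x) x"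
  by (simp add: positive_op_def complex_eq_iff)

text \<open>Polarization with the scalars 1 and \<open>\<i>\<close>; over the reals this would fail.\<close>
lemma positive_op_selfadjoint:
  assumes P: "positive_op P"
  shows "cinner (P x) y = cinner x (P y)"
proof -
  have PB: "P \<in> BH" using P by (rule positive_op_BH)
  define s where "s u v = cinner (P u) v - cinner u (P v)" for u v
  have diag: "s v v = 0" for v
    using positive_op_form_real[OF P, of v] by (simp add: s_def cinner_commute[of v])
  have "s (x + y) (x + y) = s x x + s x y + s y x + s y y"
    by (simp add: s_def BH_add[OF PB] cinner_add_left cinner_add_right algebra_simps)
  then have "s x y + s y x = 0"
    by (simp add: diag)
  moreover have "s (x + scaleC \<i> y) (x + scaleC \<i> y) = s x x - \<i> * s x y + \<i> * s y x + s y y"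
    by (simp add: s_def BH_add[OF PB] BH_scaleC[OF PB] cinner_add_left cinner_add_right
        cinner_scaleC_left cinner_scaleC_right algebra_simps)
  then have "s y x = s x y"
    by (simp add: diag algebra_simps)
  ultimately show ?thesis
    by (simp add: s_def)
qed

text \<open>Positivity of the form at \<open>x - (1/K) P x\<close>.\<close>
lemma positive_op_norm_square_le:
  assumes P: "positive_op P" and "K > 0" and K: "\<And>v. norm (P v) \<le> norm v * K"
  shows "(norm (P x))\<^sup>2 \<le> K * Re (cinner (P x) x)"
proof -
  have PB: "P \<in> BH" using P by (rule positive_op_BH)
  define n where "n = (norm (P x))\<^sup>2"
  have "Re (cinner (P (P x)) (P x)) \<le> norm (P (P x)) * norm (P x)"
    by (rule Re_cinner_le_norm)
  also have "\<dots> \<le> norm (P x) * K * norm (P x)"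
    using K[of "P x"] by (simp add: mult_right_mono)
  finally have PPx: "Re (cinner (P (P x)) (P x)) \<le> K * n"
    by (simp add: n_def power2_eq_square ac_simps)
  have "cinner (P (x - (1/K) *\<^sub>R P x)) (x - (1/K) *\<^sub>R P x)
      = cinner (P x) x - of_real (2 / K) * cinner (P x) (P x)
        + of_real (1 / K^2) * cinner (P (P x)) (P x)"
    by (simp add: BH_diff[OF PB] BH_scaleR[OF PB] cinner_diff_left cinner_diff_right
        cinner_scaleR_left cinner_scaleR_right positive_op_selfadjoint[OF P, of "P x" x]
        power2_eq_square algebra_simps)
  then have "0 \<le> Re (cinner (P x) x) - (2 / K) * n + (1 / K^2) * Re (cinner (P (P x)) (P x))"
    using positive_op_Re_form_nonneg[OF P, of "x - (1/K) *\<^sub>R P x"] by (simp add: n_def Re_cinner_self)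
  also have "\<dots> \<le> Re (cinner (P x) x) - n / K"
    using PPx \<open>K > 0\<close> by (simp add: field_simps power2_eq_square)
  finally show ?thesis
    using \<open>K > 0\<close> by (simp add: n_def field_simps)
qed

lemma positive_op_eq_zero_if_form_zero:
  assumes P: "positive_op P" and "Re (cinner (P x) x) = 0"
  shows "P x = 0"
proof -
  obtain K where "K > 0" "\<And>v. norm (P v) \<le> norm v * K"
    using BH_pos_bounded[OF positive_op_BH[OF P]] by blast
  then show ?thesis
    using positive_op_norm_square_le[OF P, of K x] assms(2) by simp
qed

section \<open>The power series of \<open>1 - \<surd>(1 - x)\<close> at a contraction\<close>

lemma sum_square_split:
  fixes f :: "nat \<Rightarrow> nat \<Rightarrow> 'a::ab_group_add"
  shows "(\<Sum>i<N. \<Sum>j<N. f i j) = (\<Sum>k<N. \<Sum>i\<le>k. f i (k - i))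
           + (\<Sum>(i, j)\<in>{..<N} \<times> {..<N} - {(i, j). i + j < N}. f i j)"
proof -
  have "{(i, j). i + j < N} \<subseteq> {..<N} \<times> {..<N}" by auto
  then have "(\<Sum>(i, j)\<in>{..<N} \<times> {..<N}. f i j)
      = (\<Sum>(i, j)\<in>{(i, j). i + j < N}. f i j) + (\<Sum>(i, j)\<in>{..<N} \<times> {..<N} - {(i, j). i + j < N}. f i j)"
    by (subst sum.subset_diff) auto
  then show ?thesis
    by (simp add: sum.cartesian_product sum.triangle_reindex)
qed

lemma bounded_bilinear_Cauchy_product_sums:
  fixes a :: "nat \<Rightarrow> 'a::banach" and b :: "nat \<Rightarrow> 'b::banach"
  assumes p: "bounded_bilinear p"
    and a: "summable (\<lambda>k. norm (a k))" and b: "summable (\<lambda>k. norm (b k))"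
  shows "(\<lambda>k. \<Sum>i\<le>k. p (a i) (b (k - i))) sums p (\<Sum>k. a k) (\<Sum>k. b k)"
proof -
  interpret p: bounded_bilinear p by (rule p)
  obtain K where K: "\<And>x y. norm (p x y) \<le> norm x * norm y * K"
    using p.bounded by blast
  define R where "R N = {..<N} \<times> {..<N} - {(i, j). i + j < N}" for N :: nat
  let ?g = "\<lambda>i j. p (a i) (b j)" and ?h = "\<lambda>i j. norm (a i) * norm (b j)"
  have "p (\<Sum>i<N. a i) (\<Sum>j<N. b j) = (\<Sum>i<N. \<Sum>j<N. ?g i j)" for N
    by (subst p.sum_left) (simp add: p.sum_right)
  moreover have "(\<lambda>N. p (\<Sum>i<N. a i) (\<Sum>j<N. b j)) \<longlonglongrightarrow> p (\<Sum>k. a k) (\<Sum>k. b k)"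
    by (intro p.tendsto summable_LIMSEQ summable_norm_cancel[OF a] summable_norm_cancel[OF b])
  ultimately have square_g: "(\<lambda>N. \<Sum>i<N. \<Sum>j<N. ?g i j) \<longlonglongrightarrow> p (\<Sum>k. a k) (\<Sum>k. b k)"
    by simp
  have "(\<lambda>N. (\<Sum>i<N. norm (a i)) * (\<Sum>j<N. norm (b j))) \<longlonglongrightarrow> (\<Sum>k. norm (a k)) * (\<Sum>k. norm (b k))"
    using a b by (intro tendsto_mult summable_LIMSEQ)
  then have square_h: "(\<lambda>N. \<Sum>i<N. \<Sum>j<N. ?h i j) \<longlonglongrightarrow> (\<Sum>k. norm (a k)) * (\<Sum>k. norm (b k))"
    by (simp add: sum_product)
  have "(\<lambda>k. \<Sum>i\<le>k. ?h i (k - i)) sums ((\<Sum>k. norm (a k)) * (\<Sum>k. norm (b k)))"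
    using a b by (intro Cauchy_product_sums) simp_all
  with square_h have "(\<lambda>N. (\<Sum>i<N. \<Sum>j<N. ?h i j) - (\<Sum>k<N. \<Sum>i\<le>k. ?h i (k - i)))
      \<longlonglongrightarrow> (\<Sum>k. norm (a k)) * (\<Sum>k. norm (b k)) - (\<Sum>k. norm (a k)) * (\<Sum>k. norm (b k))"
    unfolding sums_def by (rule tendsto_diff)
  then have rest_h: "(\<lambda>N. \<Sum>(i, j)\<in>R N. ?h i j) \<longlonglongrightarrow> 0"
    by (simp add: sum_square_split[where f = ?h] R_def)
  have "norm (\<Sum>(i, j)\<in>R N. ?g i j) \<le> (\<Sum>(i, j)\<in>R N. K * ?h i j)" for N
    by (rule sum_norm_le) (use K in \<open>auto simp: ac_simps\<close>)
  then have "\<forall>N. norm (\<Sum>(i, j)\<in>R N. ?g i j) \<le> K * (\<Sum>(i, j)\<in>R N. ?h i j)"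
    by (simp add: sum_distrib_left case_prod_unfold)
  moreover have "(\<lambda>N. K * (\<Sum>(i, j)\<in>R N. ?h i j)) \<longlonglongrightarrow> 0"
    by (rule tendsto_mult_right_zero[OF rest_h])
  ultimately have "(\<lambda>N. \<Sum>(i, j)\<in>R N. ?g i j) \<longlonglongrightarrow> 0"
    by (rule Lim_null_comparison[OF always_eventually])
  with square_g have "(\<lambda>N. (\<Sum>i<N. \<Sum>j<N. ?g i j) - (\<Sum>(i, j)\<in>R N. ?g i j))
      \<longlonglongrightarrow> p (\<Sum>k. a k) (\<Sum>k. b k) - 0"
    by (rule tendsto_diff)
  then show ?thesis
    by (simp add: sums_def sum_square_split[where f = ?g] R_def)
qed

text \<open>The Taylor coefficients of \<open>1 - \<surd>(1 - x)\<close>, so that \<open>sqrt_series B = I - \<surd>(I - B)\<close>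
  below: the power series s satisfies \<open>s\<^sup>2 = 2 s - x\<close>, and comparing coefficients gives
  the recursion.\<close>
fun sqrt_coeff :: "nat \<Rightarrow> real" where
  "sqrt_coeff n = (if n = 0 then 0 else if n = 1 then 1/2
     else (1/2) * (\<Sum>i\<in>{1..<n}. sqrt_coeff i * sqrt_coeff (n - i)))"

declare sqrt_coeff.simps [simp del]

lemma sqrt_coeff_0 [simp]: "sqrt_coeff 0 = 0"
  by (simp add: sqrt_coeff.simps)

lemma sqrt_coeff_1 [simp]: "sqrt_coeff (Suc 0) = 1/2"
  by (simp add: sqrt_coeff.simps)

lemma sqrt_coeff_nonneg: "sqrt_coeff n \<ge> 0"
proof (induction n rule: less_induct)
  case (less n)
  then show ?case
    by (subst sqrt_coeff.simps) (auto intro!: sum_nonneg)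
qed

lemma sqrt_coeff_convolution:
  "(\<Sum>i\<le>n. sqrt_coeff i * sqrt_coeff (n - i)) = 2 * sqrt_coeff n - (if n = 1 then 1 else 0)"
proof (cases "n \<ge> 2")
  case True
  then have "{..n} = insert 0 (insert n {1..<n})" by auto
  with True show ?thesis
    by (subst (2) sqrt_coeff.simps) simp
next
  case False
  then have "n = 0 \<or> n = 1" by auto
  then show ?thesis by auto
qed

lemma sqrt_coeff_partial_sum_le_1: "(\<Sum>i<N. sqrt_coeff i) \<le> 1"
proof (induction N)
  case (Suc N)
  let ?c = sqrt_coeff
  define T where "T = {(i, j). i + j \<le> N}"
  have index_pos: "0 < i" if "?c i \<noteq> 0" for i
    using that by (cases i) auto
  have "finite T"
    by (rule finite_subset[of _ "{..N} \<times> {..N}"]) (auto simp: T_def)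
  have "2 * (\<Sum>k\<le>N. ?c k) - (if N \<ge> 1 then 1 else 0) = (\<Sum>k\<le>N. \<Sum>i\<le>k. ?c i * ?c (k - i))"
    by (simp add: sqrt_coeff_convolution sum_subtractf sum_distrib_left)
  also have "\<dots> = (\<Sum>(i, j)\<in>T. ?c i * ?c j)"
    by (simp add: T_def sum.triangle_reindex_eq)
  also have "\<dots> = (\<Sum>(i, j)\<in>T \<inter> {..<N} \<times> {..<N}. ?c i * ?c j)"
    using \<open>finite T\<close> by (intro sum.mono_neutral_right) (auto simp: T_def dest!: index_pos)
  also have "\<dots> \<le> (\<Sum>(i, j)\<in>{..<N} \<times> {..<N}. ?c i * ?c j)"
    by (intro sum_mono2) (auto intro: mult_nonneg_nonneg sqrt_coeff_nonneg)
  also have "\<dots> = (\<Sum>i<N. ?c i) * (\<Sum>i<N. ?c i)"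
    by (simp add: sum_product sum.cartesian_product)
  also have "\<dots> \<le> 1"
    using Suc.IH by (intro mult_le_one sum_nonneg sqrt_coeff_nonneg)
  finally show ?case
    by (cases "N = 0") (auto simp: lessThan_Suc_atMost)
qed simp

lemma summable_sqrt_coeff: "summable sqrt_coeff"
  by (rule summableI_nonneg_bounded[where x = 1]) (auto intro: sqrt_coeff_nonneg sqrt_coeff_partial_sum_le_1)

lemma suminf_sqrt_coeff_le_1: "suminf sqrt_coeff \<le> 1"
  by (rule suminf_le_const[OF summable_sqrt_coeff sqrt_coeff_partial_sum_le_1])

lemma funpow_commute:
  assumes "\<And>v. Z (B v) = B (Z v)"
  shows "Z ((B ^^ n) v) = (B ^^ n) (Z v)"
  by (induction n) (simp_all add: assms)

lemma funpow_selfadjoint: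
  assumes "\<And>x y. cinner (B x) y = cinner x (B y)"
  shows "cinner ((B ^^ n) x) y = cinner x ((B ^^ n) y)"
  by (induction n arbitrary: y) (simp_all add: assms flip: funpow_swap1)

definition sqrt_series :: "('a::chilbert \<Rightarrow> 'a) \<Rightarrow> 'a \<Rightarrow> 'a" where
  "sqrt_series B v = (\<Sum>k. sqrt_coeff k *\<^sub>R (B ^^ k) v)"

context
  fixes B :: "'a::chilbert \<Rightarrow> 'a"
  assumes B: "B \<in> BH" and B_contraction: "\<And>v. norm (B v) \<le> norm v"
begin

lemma norm_funpow_le: "norm ((B ^^ n) v) \<le> norm v"
  by (induction n) (auto intro: order_trans B_contraction)

lemma sqrt_series_sums: "(\<lambda>k. sqrt_coeff k *\<^sub>R (B ^^ k) v) sums sqrt_series B v"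
proof -
  have "summable (\<lambda>k. sqrt_coeff k * norm v)"
    by (intro summable_mult2 summable_sqrt_coeff)
  then have "summable (\<lambda>k. sqrt_coeff k *\<^sub>R (B ^^ k) v)"
    by (rule summable_comparison_test'[where N = 0])
       (simp add: sqrt_coeff_nonneg mult_left_mono norm_funpow_le)
  then show ?thesis
    by (simp add: sqrt_series_def summable_sums)
qed

lemma sqrt_series_commute:
  assumes Z: "bounded_linear Z" and ZB: "\<And>v. Z (B v) = B (Z v)"
  shows "Z (sqrt_series B v) = sqrt_series B (Z v)"
proof -
  have "(\<lambda>k. Z (sqrt_coeff k *\<^sub>R (B ^^ k) v)) sums Z (sqrt_series B v)"
    by (rule bounded_linear.sums[OF Z sqrt_series_sums])
  moreover have "Z (sqrt_coeff k *\<^sub>R (B ^^ k) v) = sqrt_coeff k *\<^sub>R (B ^^ k) (Z v)" for k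
    by (simp add: linear_scale[OF bounded_linear.linear[OF Z]] funpow_commute[of Z B, OF ZB])
  ultimately show ?thesis
    using sqrt_series_sums[of "Z v"] by (simp add: sums_unique2)
qed

lemma blinfun_apply_Blinfun_funpow: "blinfun_apply (Blinfun (B ^^ k)) = B ^^ k"
  by (intro bounded_linear_Blinfun_apply BH_bounded_linear BH_funpow B)

lemma summable_norm_sqrt_series_blinfun:
  "summable (\<lambda>k. norm (sqrt_coeff k *\<^sub>R Blinfun (B ^^ k)))"
proof (rule summable_comparison_test'[OF summable_sqrt_coeff, where N = 0])
  fix k
  show "norm (norm (sqrt_coeff k *\<^sub>R Blinfun (B ^^ k))) \<le> sqrt_coeff k"
    using norm_blinfun_bound[of 1 "Blinfun (B ^^ k)"]
    by (simp add: blinfun_apply_Blinfun_funpow norm_funpow_le sqrt_coeff_nonneg mult_left_le)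
qed

lemma blinfun_apply_sqrt_series:
  "blinfun_apply (\<Sum>k. sqrt_coeff k *\<^sub>R Blinfun (B ^^ k)) = sqrt_series B"
proof
  fix v
  have "(\<lambda>k. blinfun_apply (sqrt_coeff k *\<^sub>R Blinfun (B ^^ k)) v)
      sums blinfun_apply (\<Sum>k. sqrt_coeff k *\<^sub>R Blinfun (B ^^ k)) v"
    using summable_norm_cancel[OF summable_norm_sqrt_series_blinfun]
    by (intro bounded_linear.sums[OF blinfun.bounded_linear_left]) (simp add: summable_sums)
  then have "(\<lambda>k. sqrt_coeff k *\<^sub>R (B ^^ k) v)
      sums blinfun_apply (\<Sum>k. sqrt_coeff k *\<^sub>R Blinfun (B ^^ k)) v"
    by (simp add: blinfun.scaleR_left blinfun_apply_Blinfun_funpow)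
  then show "blinfun_apply (\<Sum>k. sqrt_coeff k *\<^sub>R Blinfun (B ^^ k)) v = sqrt_series B v"
    using sqrt_series_sums by (rule sums_unique2)
qed

lemma sqrt_series_BH: "sqrt_series B \<in> BH"
proof (rule BH_I)
  show "bounded_linear (sqrt_series B)"
    using blinfun.bounded_linear_right by (simp flip: blinfun_apply_sqrt_series)
  show "sqrt_series B (scaleC c v) = scaleC c (sqrt_series B v)" for c v
    by (simp add: sqrt_series_commute[OF bounded_linear_scaleC] BH_scaleC[OF B])
qed

lemma sqrt_series_square: "sqrt_series B (sqrt_series B v) = 2 *\<^sub>R sqrt_series B v - B v"
proof -
  let ?c = sqrt_coeff and ?P = "\<lambda>k. Blinfun (B ^^ k)"
  define a where "a = (\<lambda>k. ?c k *\<^sub>R ?P k)"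
  define L where "L = suminf a"
  have "(\<lambda>k. \<Sum>i\<le>k. a i o\<^sub>L a (k - i)) sums (L o\<^sub>L L)"
    unfolding L_def using summable_norm_sqrt_series_blinfun
    by (intro bounded_bilinear_Cauchy_product_sums bounded_bilinear_blinfun_compose)
       (simp_all add: a_def)
  moreover have "(\<Sum>i\<le>k. a i o\<^sub>L a (k - i)) = 2 *\<^sub>R a k - (if k = 1 then ?P k else 0)" for k
  proof -
    have "a i o\<^sub>L a (k - i) = (?c i * ?c (k - i)) *\<^sub>R ?P k" if "i \<le> k" for i
    proof (rule blinfun_eqI)
      fix x
      have "(B ^^ i) ((B ^^ (k - i)) x) = (B ^^ k) x"
        using that by (metis funpow_add comp_apply le_add_diff_inverse)
      then show "blinfun_apply (a i o\<^sub>L a (k - i)) x = blinfun_apply ((?c i * ?c (k - i)) *\<^sub>R ?P k) x"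
        by (simp add: a_def blinfun.scaleR_left blinfun.scaleR_right blinfun_apply_Blinfun_funpow)
    qed
    then have "(\<Sum>i\<le>k. a i o\<^sub>L a (k - i)) = (\<Sum>i\<le>k. ?c i * ?c (k - i)) *\<^sub>R ?P k"
      by (simp add: scaleR_sum_left)
    then show ?thesis
      by (cases "k = 1") (simp_all add: sqrt_coeff_convolution a_def scaleR_diff_left)
  qed
  moreover have "(\<lambda>k. 2 *\<^sub>R a k - (if k = 1 then ?P k else 0)) sums (2 *\<^sub>R L - ?P 1)"
    unfolding L_def using summable_norm_cancel[OF summable_norm_sqrt_series_blinfun]
    by (intro sums_diff sums_scaleR_right sums_single) (simp add: a_def summable_sums)
  ultimately have "L o\<^sub>L L = 2 *\<^sub>R L - ?P 1"
    by (simp add: sums_unique2)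
  then have "blinfun_apply (L o\<^sub>L L) v = blinfun_apply (2 *\<^sub>R L - ?P 1) v"
    by simp
  then have "blinfun_apply L (blinfun_apply L v) = 2 *\<^sub>R blinfun_apply L v - B v"
    using blinfun_apply_Blinfun_funpow[of 1]
    by (simp add: blinfun.diff_left blinfun.scaleR_left)
  then show ?thesis
    by (simp add: L_def a_def blinfun_apply_sqrt_series)
qed

context
  assumes B_selfadjoint: "\<And>x y. cinner (B x) y = cinner x (B y)"
begin

lemma cinner_sqrt_series_sums:
  "(\<lambda>k. of_real (sqrt_coeff k * Re (cinner ((B ^^ k) v) v))) sums cinner (sqrt_series B v) v"
proof -
  have "(\<lambda>k. cinner (sqrt_coeff k *\<^sub>R (B ^^ k) v) v) sums cinner (sqrt_series B v) v"
    by (rule bounded_linear.sums[OF bounded_linear_cinner_left sqrt_series_sums])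
  moreover have "cinner ((B ^^ k) v) v = of_real (Re (cinner ((B ^^ k) v) v))" for k
    using funpow_selfadjoint[OF B_selfadjoint, of k v v]
    by (metis cinner_commute Reals_cnj_iff of_real_Re)
  ultimately show ?thesis
    by (simp add: cinner_scaleR_left)
qed

lemma Im_cinner_sqrt_series: "Im (cinner (sqrt_series B v) v) = 0"
proof -
  have "(\<lambda>k. 0) sums Im (cinner (sqrt_series B v) v)"
    using sums_Im[OF cinner_sqrt_series_sums] by simp
  then show ?thesis
    using sums_zero sums_unique2 by metis
qed

lemma Re_cinner_sqrt_series_le: "Re (cinner (sqrt_series B v) v) \<le> (norm v)\<^sup>2"
proof -
  have term_le: "Re (cinner ((B ^^ k) v) v) \<le> (norm v)\<^sup>2" for k
    using Re_cinner_le_norm[of "(B ^^ k) v" v] norm_funpow_le[of k v]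
    by (simp add: power2_eq_square mult_right_mono order_trans)
  have "(\<lambda>k. sqrt_coeff k * Re (cinner ((B ^^ k) v) v)) sums Re (cinner (sqrt_series B v) v)"
    using sums_Re[OF cinner_sqrt_series_sums] by simp
  moreover have "(\<lambda>k. sqrt_coeff k * (norm v)\<^sup>2) sums (suminf sqrt_coeff * (norm v)\<^sup>2)"
    using summable_sqrt_coeff by (intro sums_mult2) (simp add: summable_sums)
  ultimately have "Re (cinner (sqrt_series B v) v) \<le> suminf sqrt_coeff * (norm v)\<^sup>2"
    by (rule sums_le[rotated]) (simp add: term_le mult_left_mono sqrt_coeff_nonneg)
  also have "\<dots> \<le> (norm v)\<^sup>2"
    by (rule mult_left_le_one_le)
       (simp_all add: suminf_nonneg summable_sqrt_coeff sqrt_coeff_nonneg suminf_sqrt_coeff_le_1)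
  finally show ?thesis .
qed

end

end

section \<open>The positive square root\<close>

lemma positive_op_contraction:
  assumes A: "positive_op A" and "M > 0" and M: "\<And>v. norm (A v) \<le> norm v * M"
  shows "norm (v - (1/M) *\<^sub>R A v) \<le> norm v"
proof -
  define q where "q = Re (cinner (A v) v)"
  have "q \<ge> 0"
    unfolding q_def by (rule positive_op_Re_form_nonneg[OF A])
  have "(norm (A v))\<^sup>2 \<le> M * q"
    unfolding q_def by (rule positive_op_norm_square_le[OF A \<open>M > 0\<close> M])
  have "Re (cinner v (A v)) = q"
    by (simp add: q_def positive_op_selfadjoint[OF A])
  then have "(norm (v - (1/M) *\<^sub>R A v))\<^sup>2 = (norm v)\<^sup>2 + (norm (A v))\<^sup>2 / M\<^sup>2 - 2 * q / M"
    using \<open>M > 0\<close> by (simp add: norm_diff_square cinner_scaleR_right power_divide)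
  also have "\<dots> \<le> (norm v)\<^sup>2 + M * q / M\<^sup>2 - 2 * q / M"
    using \<open>(norm (A v))\<^sup>2 \<le> M * q\<close> by (simp add: divide_right_mono)
  also have "\<dots> = (norm v)\<^sup>2 - q / M"
    using \<open>M > 0\<close> by (simp add: power2_eq_square field_simps)
  also have "\<dots> \<le> (norm v)\<^sup>2"
    using \<open>q \<ge> 0\<close> \<open>M > 0\<close> by simp
  finally show ?thesis
    by (rule power2_le_imp_le) simp
qed

lemma positive_sqrt_exists:
  assumes A: "positive_op A"
  shows "\<exists>R. positive_op R \<and> R \<circ> R = A \<and>
           (\<forall>Z\<in>BH. (\<forall>v. Z (A v) = A (Z v)) \<longrightarrow> (\<forall>v. Z (R v) = R (Z v)))"
proof -
  have AB: "A \<in> BH" using A by (rule positive_op_BH)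
  obtain M where "M > 0" and M: "\<And>v. norm (A v) \<le> norm v * M"
    using BH_pos_bounded[OF AB] by blast
  define B where "B = (\<lambda>v. v - (1/M) *\<^sub>R A v)"
  define S where "S = sqrt_series B"
  define R where "R = (\<lambda>v. sqrt M *\<^sub>R (v - S v))"
  have B_BH: "B \<in> BH"
    unfolding B_def by (intro BH_sub BH_ident BH_scale AB)
  have B_contraction: "norm (B v) \<le> norm v" for v
    unfolding B_def by (rule positive_op_contraction[OF A \<open>M > 0\<close> M])
  have B_selfadjoint: "cinner (B x) y = cinner x (B y)" for x y
    by (simp add: B_def cinner_diff_left cinner_diff_right cinner_scaleR_left cinner_scaleR_right
        positive_op_selfadjoint[OF A])
  have S_BH: "S \<in> BH"
    unfolding S_def by (rule sqrt_series_BH[OF B_BH B_contraction])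
  have R_BH: "R \<in> BH"
    unfolding R_def by (intro BH_sub BH_ident BH_scale S_BH)
  have "positive_op R"
    unfolding positive_op_def
  proof (intro conjI allI R_BH)
    fix v
    have "cinner (R v) v = of_real (sqrt M) * (of_real ((norm v)\<^sup>2) - cinner (S v) v)"
      by (simp add: R_def cinner_scaleR_left cinner_diff_left cinner_norm)
    then show "Im (cinner (R v) v) = 0" and "Re (cinner (R v) v) \<ge> 0"
      using Im_cinner_sqrt_series[OF B_BH B_contraction B_selfadjoint, of v]
        Re_cinner_sqrt_series_le[OF B_BH B_contraction B_selfadjoint, of v] \<open>M > 0\<close>
      by (simp_all add: S_def)
  qed
  moreover have "R \<circ> R = A"
  proof
    fix v
    have "S (S v) = 2 *\<^sub>R S v - B v"
      unfolding S_def by (rule sqrt_series_square[OF B_BH B_contraction])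
    then have "(v - S v) - S (v - S v) = (1/M) *\<^sub>R A v"
      by (simp add: BH_diff[OF S_BH] B_def scaleR_2)
    then show "(R \<circ> R) v = A v"
      using \<open>M > 0\<close> by (simp add: R_def BH_scaleR[OF S_BH] BH_diff[OF S_BH] flip: scaleR_diff_right)
  qed
  moreover have "Z (R v) = R (Z v)" if Z: "Z \<in> BH" and ZA: "\<And>v. Z (A v) = A (Z v)" for Z v
  proof -
    have "Z (B v) = B (Z v)" for v
      by (simp add: B_def BH_diff[OF Z] BH_scaleR[OF Z] ZA)
    then have "Z (S v) = S (Z v)"
      unfolding S_def by (intro sqrt_series_commute[OF B_BH B_contraction] BH_bounded_linear Z)
    then show ?thesis
      by (simp add: R_def BH_diff[OF Z] BH_scaleR[OF Z])
  qed
  ultimately show ?thesis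
    by blast
qed

lemma positive_sqrt_unique:
  assumes R: "positive_op R" and R': "positive_op R'"
    and square: "R \<circ> R = R' \<circ> R'" and commute: "\<And>v. R' (R v) = R (R' v)"
  shows "R' = R"
proof
  fix x
  have RB: "R \<in> BH" and R'B: "R' \<in> BH"
    using R R' by (simp_all add: positive_op_BH)
  define y where "y = R x - R' x"
  have "R y + R' y = 0"
    using fun_cong[OF square, of x]
    by (simp add: y_def BH_diff[OF RB] BH_diff[OF R'B] commute)
  then have "Re (cinner (R y + R' y) y) = 0"
    by simp
  then have "Re (cinner (R y) y) + Re (cinner (R' y) y) = 0"
    by (simp add: cinner_add_left)
  then have "Re (cinner (R y) y) = 0" and "Re (cinner (R' y) y) = 0"
    using positive_op_Re_form_nonneg[OF R, of y] positive_op_Re_form_nonneg[OF R', of y]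
    by linarith+
  then have "R y = 0" and "R' y = 0"
    using R R' by (simp_all add: positive_op_eq_zero_if_form_zero)
  then have "cinner y y = 0"
    by (simp add: y_def cinner_diff_left positive_op_selfadjoint[OF R]
        positive_op_selfadjoint[OF R'] flip: cinner_diff_right)
  then show "R' x = R x"
    by (simp add: y_def)
qed

theorem ex1_positive_sqrt:
  assumes A: "positive_op A"
  shows "\<exists>!R. positive_op R \<and> R \<circ> R = A"
proof -
  obtain R where R: "positive_op R" "R \<circ> R = A"
    and commute: "\<And>Z v. Z \<in> BH \<Longrightarrow> (\<And>v. Z (A v) = A (Z v)) \<Longrightarrow> Z (R v) = R (Z v)"
    using positive_sqrt_exists[OF A] by blast
  have "R' = R" if R': "positive_op R'" "R' \<circ> R' = A" for R'
  proof (rule positive_sqrt_unique[OF R(1) R'(1)])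
    show "R \<circ> R = R' \<circ> R'"
      using R(2) R'(2) by simp
    have "R' (A v) = A (R' v)" for v
      using R'(2) by (metis comp_apply)
    then show "R' (R v) = R (R' v)" for v
      using R'(1) by (intro commute positive_op_BH)
  qed
  with R show ?thesis
    by blast
qed

lemma
  assumes "positive_op A"
  shows positive_op_op_sqrt: "positive_op (op_sqrt A)"
    and op_sqrt_square: "op_sqrt A \<circ> op_sqrt A = A"
  using theI'[OF ex1_positive_sqrt[OF assms]] by (simp_all add: op_sqrt_def)

section \<open>A-invertibility\<close>

lemma B_sqrtA_kernel_invariant:
  assumes A: "positive_op A" and X: "X \<in> B_sqrtA A" and "A z = 0"
  shows "A (X z) = 0"
proof -
  define R where "R = op_sqrt A"
  have R: "positive_op R" and RR: "\<And>v. R (R v) = A v"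
    using positive_op_op_sqrt[OF A] op_sqrt_square[OF A] by (auto simp: R_def fun_eq_iff)
  have XB: "X \<in> BH" and range: "range (adjoint X \<circ> R) \<subseteq> range R"
    using X by (auto simp: B_sqrtA_def R_def)
  have "cinner (R z) (R z) = 0"
    using \<open>A z = 0\<close> by (simp add: positive_op_selfadjoint[OF R, symmetric] RR)
  then have Rz: "R z = 0"
    by simp
  have "cinner (R (X z)) y = 0" for y
  proof -
    obtain w where w: "adjoint X (R y) = R w"
      using range by auto
    have "cinner (R (X z)) y = cinner z (adjoint X (R y))"
      by (simp add: positive_op_selfadjoint[OF R] cinner_adjoint[OF XB])
    also have "\<dots> = cinner (R z) w"
      by (simp add: w positive_op_selfadjoint[OF R])
    finally show ?thesis
      by (simp add: Rz)
  qed
  then have "R (X z) = 0"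
    using cinner_self_eq_zero by blast
  then show ?thesis
    by (metis RR BH_zero positive_op_BH[OF R])
qed

lemma A_right_inverse_eq_left_inverse:
  assumes A: "positive_op A" and S2: "S2 \<in> B_sqrtA A"
    and right: "A \<circ> T \<circ> S1 = A" and left: "A \<circ> S2 \<circ> T = A"
  shows "A \<circ> S1 = A \<circ> S2"
proof
  fix x
  have AB: "A \<in> BH" and S2B: "S2 \<in> BH"
    using A S2 by (simp_all add: positive_op_BH B_sqrtA_def)
  have "A (T (S1 x) - x) = 0"
    using fun_cong[OF right, of x] by (simp add: BH_diff[OF AB])
  then have "A (S2 (T (S1 x) - x)) = 0"
    by (rule B_sqrtA_kernel_invariant[OF A S2])
  then show "(A \<circ> S1) x = (A \<circ> S2) x"
    using fun_cong[OF left, of "S1 x"] by (simp add: BH_diff[OF AB] BH_diff[OF S2B])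
qed

theorem mainTheorem13:
  fixes A T :: "'a::chilbert \<Rightarrow> 'a"
  assumes "positive_op A"
    and "A \<noteq> (\<lambda>_. 0)"
    and "T \<in> B_sqrtA A"
  shows "A_invertible A T \<longleftrightarrow>
         (\<exists>S1 \<in> B_sqrtA A. \<exists>S2 \<in> B_sqrtA A. A \<circ> T \<circ> S1 = A \<and> A \<circ> S2 \<circ> T = A)"
proof
  assume "A_invertible A T"
  then show "\<exists>S1 \<in> B_sqrtA A. \<exists>S2 \<in> B_sqrtA A. A \<circ> T \<circ> S1 = A \<and> A \<circ> S2 \<circ> T = A"
    by (auto simp: A_invertible_def)
next
  assume "\<exists>S1 \<in> B_sqrtA A. \<exists>S2 \<in> B_sqrtA A. A \<circ> T \<circ> S1 = A \<and> A \<circ> S2 \<circ> T = A"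
  then obtain S1 S2 where S1: "S1 \<in> B_sqrtA A" and S2: "S2 \<in> B_sqrtA A"
    and right: "A \<circ> T \<circ> S1 = A" and left: "A \<circ> S2 \<circ> T = A"
    by blast
  have "A \<circ> S1 \<circ> T = A"
    using A_right_inverse_eq_left_inverse[OF assms(1) S2 right left] left by (simp add: comp_assoc)
  moreover have "X \<noteq> (\<lambda>_. 0)" if "A \<circ> Y \<circ> X = A" "Y \<in> B_sqrtA A" for X Y
    using that assms(1,2) by (auto simp: B_sqrtA_def BH_zero positive_op_BH)
  ultimately show "A_invertible A T"
    unfolding A_invertible_def using assms(3) S1 S2 right left by blast
qed

end
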